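(* Let $\varphi\in\mathcal I^L$ and let $S=(S_{kl})$ be the symmetric integer matrix with $\varphi_*(b_l)=b_l+\sum_k S_{kl}a_k$. Then for every $x\in D_2(H)$, $$\mu(x,\varphi)=\Big(\tfrac12\omega_S+\omega_\delta\Big)\big(\operatorname{Tr}^{\omega_S}(x)\big).$$
   Context: Let $\Sigma_{g,1}$ be a compact connected oriented surface of genus $g$ with one boundary component, $\mathcal M$ its mapping class group (fixing the boundary pointwise), $H=H_1(\Sigma_{g,1};\mathbb Z)$ with intersection form $\omega$, $\mathcal L(H)$ the free Lie ring on $H$ embedded in $T(H)$ via $[x,y]=x\otimes y-y\otimes x$, and $D_2(H)=\ker(H\otimes\mathcal L_3(H)\to\mathcal L_4(H),\ h\otimes u\mapsto[h,u])$. Let $V_g$ be a handlebody with $\Sigma_{g,1}\subset\partial V_g$; $A=\ker(H\to H_1(V_g;\mathbb Z))$. The Lagrangian Torelli group is $\mathcal I^L:=\{\varphi\in\mathcal M:\varphi_*(A)\subset A,\ \varphi_*|_A=\mathrm{id}\}$. Let $j:\Sigma_{g,1}\to S^3$ be a Heegaard embedding (i.e. $j(\Sigma_{g,1})$ is a genus-$g$ Heegaard surface minus an open disk, splitting $S^3$ into inner handlebody $\overline V$ and outer $\overline W$, oriented from $\overline V$) which extends to $V_g$ with $j(V_g)=\overline V$; $j^+$ is $j$ pushed into $\overline W$. Fix a symplectic basis $(a_1,\dots,a_g,b_1,\dots,b_g)$ of $H$ (classes of meridians and parallels of $\overline V$, pulled back by $j$) with $a_i\in A$, such that $\operatorname{lk}(j_*(x),j^+_*(y))=\omega_\delta(x,y)$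 for all $x,y\in H$, where $\omega_\delta$ is the bilinear form on $H$ with $\omega_\delta(b_i,a_k)=\delta_{ik}$ and $\omega_\delta$ vanishing on all other pairs of basis vectors. For a symmetric matrix $S$, $\omega_S$ is the bilinear form on $H$ with $\omega_S(b_k,b_l)=S_{kl}$ and $\omega_S(a_k,\cdot)=\omega_S(\cdot,a_k)=0$; a bilinear form $\beta$ is applied to $H\otimes H$ by $x\otimes y\mapsto\beta(x,y)$. $\operatorname{Tr}^{\omega_S}:D_2(H)\to H^{\otimes2}$ is the composite $D_2(H)\subset H\otimes\mathcal L_3(H)\subset H^{\otimes4}\to H^{\otimes2}$, $x_1\otimes x_2\otimes x_3\otimes x_4\mapsto\omega_S(x_1,x_2)\,x_3\otimes x_4$. With $x\leftrightarrow y:=x\otimes y+y\otimes x$, $T(a,b;c,d):=a\otimes[b,[c,d]]+b\otimes[[c,d],a]+c\otimes[d,[a,b]]+d\otimes[[a,b],c]$, $a\odot b:=a\otimes[b,[a,b]]+b\otimes[[a,b],a]$, let $\Psi:(\Lambda^2H\otimes\Lambda^2H)^{\mathfrak S_2}\to D_2(H)$ be the surjection $(a\wedge b)\leftrightarrow(c\wedge d)\mapsto T(a,b;c,d)$, $(a\wedge b)\otimes(a\wedge b)\mapsto a\odot b$. Let $\mathcal C$ be the commutative unital ring generated by $l(u,v)$ ($u,v\in H$), linear in $u$, with $l(v,u)=l(u,v)+\omega(u,v)$; for a Heegaard embedding $k$, $\varepsilon_k:\mathcal C\to\mathbb Z$ is the ring map $l(u,v)\mapsto\operatorname{lk}(k_*(u),k^+_*(v))$;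 $\theta:(\Lambda^2H\otimes\Lambda^2H)^{\mathfrak S_2}\to\mathcal C$ is given by $(u\wedge v)\otimes(u\wedge v)\mapsto l(u,u)l(v,v)-l(u,v)l(v,u)$ and $(a\wedge b)\leftrightarrow(c\wedge d)\mapsto l(a,c)l(b,d)-l(a,d)l(b,c)-l(d,a)l(c,b)+l(c,a)l(d,b)$. Finally $\mu:D_2(H)\times\mathcal M\to\mathbb Z$ is the (well-defined) map $\mu(\Psi(x),\varphi)=(\varepsilon_j-\varepsilon_{j\circ\varphi})(\theta(x))$. *)

theory Defs
  imports Complex_Main "HOL-Library.Function_Algebras"
begin

text \<open>The genus index set is a finite type 'g (g = CARD('g)).
 H = Z^{2g} with symplectic basis a_i = e(Inl i), b_i = e(Inr i).\<close>

type_synonym 'g idx = "'g + 'g"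
type_synonym 'g vec = "'g idx \<Rightarrow> int"
type_synonym 'g ten2 = "'g idx \<times> 'g idx \<Rightarrow> int"
type_synonym 'g ten3 = "'g idx \<times> 'g idx \<times> 'g idx \<Rightarrow> int"
type_synonym 'g ten4 = "'g idx \<times> 'g idx \<times> 'g idx \<times> 'g idx \<Rightarrow> int"

definition basis_e :: "'g idx \<Rightarrow> 'g vec" where
  "basis_e k = (\<lambda>j. if j = k then 1 else 0)"

definition avec :: "'g \<Rightarrow> 'g vec" where "avec i = basis_e (Inl i)"
definition bvec :: "'g \<Rightarrow> 'g vec" where "bvec i = basis_e (Inr i)"

definition scal :: "int \<Rightarrow> 'g vec \<Rightarrow> 'g vec" where
  "scal c v = (\<lambda>j. c * v j)"

definition br2 :: "'g vec \<Rightarrow> 'g vec \<Rightarrow> 'g ten2" where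
  "br2 x y = (\<lambda>(i,j). x i * y j - y i * x j)"

definition br12 :: "'g vec \<Rightarrow> 'g ten2 \<Rightarrow> 'g ten3" where
  "br12 x t = (\<lambda>(i,j,k). x i * t (j,k) - t (i,j) * x k)"

definition br21 :: "'g ten2 \<Rightarrow> 'g vec \<Rightarrow> 'g ten3" where
  "br21 t x = (\<lambda>(i,j,k). t (i,j) * x k - x i * t (j,k))"

definition tens13 :: "'g vec \<Rightarrow> 'g ten3 \<Rightarrow> 'g ten4" where
  "tens13 h u = (\<lambda>(i,j,k,l). h i * u (j,k,l))"

definition Tgen :: "'g vec \<Rightarrow> 'g vec \<Rightarrow> 'g vec \<Rightarrow> 'g vec \<Rightarrow> 'g ten4" where
  "Tgen a b c d =
     tens13 a (br12 b (br2 c d)) + tens13 b (br21 (br2 c d) a)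
   + tens13 c (br12 d (br2 a b)) + tens13 d (br21 (br2 a b) c)"

definition odot :: "'g vec \<Rightarrow> 'g vec \<Rightarrow> 'g ten4" where
  "odot a b = tens13 a (br12 b (br2 a b)) + tens13 b (br21 (br2 a b) a)"

text \<open>Generators of (\<Lambda>^2H \<otimes> \<Lambda>^2H)^{S_2}:
  Sq u v = (u\<and>v)\<otimes>(u\<and>v),  Sw a b c d = (a\<and>b) \<leftrightarrow> (c\<and>d).
  An element is presented as a finite Z-linear combination of generators.\<close>
datatype 'v gen = Sq 'v 'v | Sw 'v 'v 'v 'v

fun Psi_gen :: "'g vec gen \<Rightarrow> 'g ten4" where
  "Psi_gen (Sq u v) = odot u v"
| "Psi_gen (Sw a b c d) = Tgen a b c d"

definition Psi :: "(int \<times> 'g vec gen) list \<Rightarrow> 'g ten4" where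
  "Psi xs = sum_list (map (\<lambda>(c,x). (\<lambda>t. c * Psi_gen x t)) xs)"

text \<open>\<epsilon>(\<theta>(x)) where \<epsilon> sends l(u,v) to L u v.\<close>
fun theta_eval_gen :: "('v \<Rightarrow> 'v \<Rightarrow> int) \<Rightarrow> 'v gen \<Rightarrow> int" where
  "theta_eval_gen L (Sq u v) = L u u * L v v - L u v * L v u"
| "theta_eval_gen L (Sw a b c d) =
     L a c * L b d - L a d * L b c - L d a * L c b + L c a * L d b"

definition theta_eval :: "('v \<Rightarrow> 'v \<Rightarrow> int) \<Rightarrow> (int \<times> 'v gen) list \<Rightarrow> int" where
  "theta_eval L xs = sum_list (map (\<lambda>(c,x). c * theta_eval_gen L x) xs)"

definition deltaM :: "'g idx \<Rightarrow> 'g idx \<Rightarrow> int" where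
  "deltaM p q = (case (p,q) of (Inr i, Inl k) \<Rightarrow> (if i = k then 1 else 0) | _ \<Rightarrow> 0)"

definition SM :: "('g \<Rightarrow> 'g \<Rightarrow> int) \<Rightarrow> 'g idx \<Rightarrow> 'g idx \<Rightarrow> int" where
  "SM S p q = (case (p,q) of (Inr k, Inr l) \<Rightarrow> S k l | _ \<Rightarrow> 0)"

definition form_vec :: "('g idx \<Rightarrow> 'g idx \<Rightarrow> int) \<Rightarrow> 'g vec \<Rightarrow> 'g vec \<Rightarrow> int" where
  "form_vec B u v = (\<Sum>p\<in>UNIV. \<Sum>q\<in>UNIV. B p q * u p * v q)"

definition omega_delta :: "'g::finite vec \<Rightarrow> 'g vec \<Rightarrow> int" where
  "omega_delta = form_vec deltaM"

definition form_ten :: "('g idx \<Rightarrow> 'g idx \<Rightarrow> int) \<Rightarrow> 'g ten2 \<Rightarrow> int" where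
  "form_ten B T = (\<Sum>p\<in>UNIV. \<Sum>q\<in>UNIV. B p q * T (p,q))"

definition TrS :: "('g::finite \<Rightarrow> 'g \<Rightarrow> int) \<Rightarrow> 'g ten4 \<Rightarrow> 'g ten2" where
  "TrS S X = (\<lambda>(k,l). \<Sum>i\<in>UNIV. \<Sum>j\<in>UNIV. SM S i j * X (i,j,k,l))"

text \<open>\<mu>(\<Psi>(x),\<phi>) = (\<epsilon>_j - \<epsilon>_{j\<circ>\<phi>})(\<theta>(x)), where
  lk(j_*u, j^+_*v) = \<omega>_\<delta>(u,v) and lk((j\<phi>)_*u,(j\<phi>)^+_*v) = \<omega>_\<delta>(\<phi>_*u,\<phi>_*v).\<close>
definition mu_rep :: "('g::finite vec \<Rightarrow> 'g vec) \<Rightarrow> (int \<times> 'g vec gen) list \<Rightarrow> int" where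
  "mu_rep phi xs = theta_eval omega_delta xs
                 - theta_eval (\<lambda>u v. omega_delta (phi u) (phi v)) xs"

end

theory Submission
  imports Defs
begin

text \<open>In coordinates \<open>\<phi>\<close> fixes the \<open>a\<^sub>i\<close> and shears \<open>b\<^sub>l\<close> by \<open>\<Sum>\<^sub>k S\<^sub>k\<^sub>l a\<^sub>k\<close>, so the
  linking pairing transforms as \<open>\<omega>\<^sub>\<delta>(\<phi>u, \<phi>v) = \<omega>\<^sub>\<delta>(u, v) + \<omega>\<^sub>S(u, v)\<close>.  Hence
  \<open>\<mu>(\<Psi>(x), \<phi>)\<close> is \<open>\<theta>\<close> evaluated at \<open>\<omega>\<^sub>\<delta>\<close> minus \<open>\<theta>\<close> evaluated at \<open>\<omega>\<^sub>\<delta> + \<omega>\<^sub>S\<close>,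
  a quadratic expression in these bilinear forms.  Expanding each generator of \<open>\<Psi>\<close>
  into pure tensors \<open>w \<otimes> x \<otimes> y \<otimes> z\<close>, on which a bilinear form \<open>\<beta>\<close> composed with
  the trace gives \<open>\<omega>\<^sub>S(w, x) \<beta>(y, z)\<close>, both sides become the same polynomial in the
  values of \<open>\<omega>\<^sub>\<delta>\<close> and \<open>\<omega>\<^sub>S\<close>; the symmetry of \<open>S\<close> accounts for the factor \<open>1/2\<close>.\<close>

lemma sum_UNIV_Plus:
  "(\<Sum>p\<in>(UNIV::('a::finite + 'b::finite) set). f p) = (\<Sum>i\<in>UNIV. f (Inl i)) + (\<Sum>i\<in>UNIV. f (Inr i))"
  by (subst UNIV_Plus_UNIV [symmetric], subst sum.Plus) auto

lemma sum_fun_apply: "(\<Sum>p\<in>A. f p) x = (\<Sum>p\<in>A. f p x :: 'b::comm_monoid_add)"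
  by (induction A rule: infinite_finite_induct) auto

lemma form_vec_deltaM: "form_vec deltaM (u::'g::finite vec) v = (\<Sum>i\<in>UNIV. u (Inr i) * v (Inl i))"
  unfolding form_vec_def sum_UNIV_Plus
  by (simp add: deltaM_def if_distrib[of "\<lambda>x. x * _"] sum.delta cong: if_cong)

lemma form_vec_SM:
  "form_vec (SM S) (u::'g::finite vec) v = (\<Sum>k\<in>UNIV. \<Sum>l\<in>UNIV. S k l * u (Inr k) * v (Inr l))"
  unfolding form_vec_def sum_UNIV_Plus by (simp add: SM_def)

lemma form_vec_SM_commute:
  assumes "\<And>k l. S k l = S l k"
  shows "form_vec (SM S) (u::'g::finite vec) v = form_vec (SM S) v u"
  unfolding form_vec_SM by (subst sum.swap) (simp add: assms mult_ac)

lemma additive_scal: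
  fixes f :: "'g vec \<Rightarrow> 'h vec"
  assumes "additive f"
  shows "f (scal c v) = scal c (f v)"
proof (induction c rule: int_induct[of _ 0])
  case base
  show ?case using additive.zero[OF assms] by (simp add: scal_def zero_fun_def[symmetric])
next
  case (step1 c)
  have scal_succ: "scal (c + 1) w = scal c w + w" for w :: "'k vec"
    by (rule ext) (simp add: scal_def algebra_simps)
  show ?case by (simp only: scal_succ additive.add[OF assms] step1)
next
  case (step2 c)
  have scal_pred: "scal (c - 1) w = scal c w - w" for w :: "'k vec"
    by (rule ext) (simp add: scal_def algebra_simps)
  show ?case by (simp only: scal_pred additive.diff[OF assms] step2)
qed

lemma vec_eq_sum_basis: "(v::'g::finite vec) = (\<Sum>p\<in>UNIV. scal (v p) (basis_e p))"
  by (rule ext) (simp add: sum_fun_apply scal_def basis_e_def of_bool_def[symmetric])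

lemma additive_apply_eq_sum_basis:
  fixes f :: "'g::finite vec \<Rightarrow> 'h vec"
  assumes "additive f"
  shows "f v j = (\<Sum>p\<in>UNIV. v p * f (basis_e p) j)"
proof -
  have "f v = (\<Sum>p\<in>UNIV. scal (v p) (f (basis_e p)))"
    by (subst vec_eq_sum_basis) (simp add: additive.sum[OF assms] additive_scal[OF assms])
  then show ?thesis by (simp add: sum_fun_apply scal_def)
qed

lemma lagrangian_torelli_apply:
  fixes phi :: "'g::finite vec \<Rightarrow> 'g vec"
  assumes "additive phi"
    and phi_a: "\<And>i. phi (avec i) = avec i"
    and phi_b: "\<And>l. phi (bvec l) = bvec l + (\<Sum>k\<in>UNIV. scal (S k l) (avec k))"
  shows "phi v j = v j + (case j of Inl k \<Rightarrow> (\<Sum>l\<in>UNIV. S k l * v (Inr l)) | Inr _ \<Rightarrow> 0)"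
proof -
  have "phi v j = (\<Sum>i\<in>UNIV. v (Inl i) * basis_e (Inl i) j)
      + (\<Sum>l\<in>UNIV. v (Inr l) * (basis_e (Inr l) j + (\<Sum>k\<in>UNIV. S k l * basis_e (Inl k) j)))"
    using phi_a phi_b
    by (subst additive_apply_eq_sum_basis[OF \<open>additive phi\<close>])
      (simp add: sum_UNIV_Plus sum_fun_apply scal_def avec_def bvec_def)
  then show ?thesis
    by (cases j) (auto simp: basis_e_def algebra_simps sum.distrib if_distrib[of "\<lambda>x. _ * x"]
        sum.delta sum.delta' cong: if_cong)
qed

lemma omega_delta_lagrangian_torelli:
  fixes phi :: "'g::finite vec \<Rightarrow> 'g vec"
  assumes "additive phi"
    and "\<And>i. phi (avec i) = avec i"
    and "\<And>l. phi (bvec l) = bvec l + (\<Sum>k\<in>UNIV. scal (S k l) (avec k))"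
  shows "omega_delta (phi u) (phi v) = omega_delta u v + form_vec (SM S) u v"
  unfolding omega_delta_def form_vec_deltaM form_vec_SM lagrangian_torelli_apply[OF assms]
  by (simp add: algebra_simps sum.distrib sum_distrib_left)

definition tensor4 :: "'g vec \<Rightarrow> 'g vec \<Rightarrow> 'g vec \<Rightarrow> 'g vec \<Rightarrow> 'g ten4" where
  "tensor4 w x y z = (\<lambda>(i, j, k, l). w i * x j * y k * z l)"

interpretation form_ten_TrS: additive "\<lambda>X. form_ten B (TrS S X)"
  by standard (simp add: form_ten_def TrS_def algebra_simps sum.distrib)

lemma form_ten_TrS_scale: "form_ten B (TrS S (\<lambda>t. c * X t)) = c * form_ten B (TrS S X)"
  by (simp add: form_ten_def TrS_def algebra_simps sum_distrib_left)

lemma form_ten_TrS_tensor4: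
  "form_ten B (TrS S (tensor4 w x y z)) = form_vec (SM S) w x * form_vec B y z"
proof -
  have inner: "(\<Sum>i\<in>UNIV. \<Sum>j\<in>UNIV. B p q * (SM S i j * tensor4 w x y z (i, j, p, q)))
      = (B p q * y p * z q) * form_vec (SM S) w x" for p q
    by (simp add: tensor4_def form_vec_def sum_distrib_left mult_ac)
  have "form_ten B (TrS S (tensor4 w x y z))
      = (\<Sum>p\<in>UNIV. \<Sum>q\<in>UNIV. \<Sum>i\<in>UNIV. \<Sum>j\<in>UNIV. B p q * (SM S i j * tensor4 w x y z (i, j, p, q)))"
    by (simp add: form_ten_def TrS_def sum_distrib_left)
  also have "\<dots> = (\<Sum>p\<in>UNIV. \<Sum>q\<in>UNIV. (B p q * y p * z q) * form_vec (SM S) w x)"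
    by (simp only: inner)
  also have "\<dots> = form_vec (SM S) w x * form_vec B y z"
    unfolding form_vec_def[of B] by (simp add: sum_distrib_left mult_ac)
  finally show ?thesis .
qed

lemma odot_eq_tensor4:
  "odot u v = tensor4 u v u v + tensor4 u v u v - tensor4 u v v u - tensor4 u u v v
    + tensor4 v u v u + tensor4 v u v u - tensor4 v v u u - tensor4 v u u v"
  by (rule ext) (auto simp: odot_def tens13_def br12_def br21_def br2_def tensor4_def algebra_simps)

lemma Tgen_eq_tensor4:
  "Tgen a b c d = tensor4 a b c d - tensor4 a b d c - tensor4 a c d b + tensor4 a d c b
    + tensor4 b c d a - tensor4 b d c a - tensor4 b a c d + tensor4 b a d c
    + tensor4 c d a b - tensor4 c d b a - tensor4 c a b d + tensor4 c b a d
    + tensor4 d a b c - tensor4 d b a c - tensor4 d c a b + tensor4 d c b a"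
  by (rule ext) (auto simp: Tgen_def tens13_def br12_def br21_def br2_def tensor4_def algebra_simps)

lemma theta_eval_gen_shift:
  fixes S :: "'g::finite \<Rightarrow> 'g \<Rightarrow> int"
  assumes S_sym: "\<And>k l. S k l = S l k"
  shows "2 * (theta_eval_gen (form_vec B) g
         - theta_eval_gen (\<lambda>u v. form_vec B u v + form_vec (SM S) u v) g)
       = form_ten (SM S) (TrS S (Psi_gen g)) + 2 * form_ten B (TrS S (Psi_gen g))"
proof (cases g)
  case (Sq u v)
  have "form_vec (SM S) v u = form_vec (SM S) u v"
    by (rule form_vec_SM_commute[OF S_sym])
  then show ?thesis
    unfolding Sq Psi_gen.simps odot_eq_tensor4
      form_ten_TrS.add form_ten_TrS.diff form_ten_TrS_tensor4
    by (simp add: algebra_simps)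
next
  case (Sw a b c d)
  have "form_vec (SM S) b a = form_vec (SM S) a b" "form_vec (SM S) c a = form_vec (SM S) a c"
     "form_vec (SM S) d a = form_vec (SM S) a d" "form_vec (SM S) c b = form_vec (SM S) b c"
     "form_vec (SM S) d b = form_vec (SM S) b d" "form_vec (SM S) d c = form_vec (SM S) c d"
    by (rule form_vec_SM_commute[OF S_sym])+
  then show ?thesis
    unfolding Sw Psi_gen.simps Tgen_eq_tensor4
      form_ten_TrS.add form_ten_TrS.diff form_ten_TrS_tensor4
    by (simp add: algebra_simps)
qed

lemma theta_eval_shift:
  fixes S :: "'g::finite \<Rightarrow> 'g \<Rightarrow> int"
  assumes S_sym: "\<And>k l. S k l = S l k"
  shows "2 * (theta_eval (form_vec B) xs
         - theta_eval (\<lambda>u v. form_vec B u v + form_vec (SM S) u v) xs)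
       = form_ten (SM S) (TrS S (Psi xs)) + 2 * form_ten B (TrS S (Psi xs))"
proof (induction xs)
  case Nil
  show ?case by (simp add: theta_eval_def Psi_def form_ten_def TrS_def)
next
  case (Cons cg xs)
  obtain c g where cg: "cg = (c, g)" by force
  have Psi_Cons: "Psi (cg # xs) = (\<lambda>t. c * Psi_gen g t) + Psi xs"
    by (simp add: Psi_def cg)
  have theta_eval_Cons: "theta_eval L (cg # xs) = c * theta_eval_gen L g + theta_eval L xs" for L
    by (simp add: theta_eval_def cg)
  have "c * (2 * (theta_eval_gen (form_vec B) g
         - theta_eval_gen (\<lambda>u v. form_vec B u v + form_vec (SM S) u v) g))
       = c * (form_ten (SM S) (TrS S (Psi_gen g)) + 2 * form_ten B (TrS S (Psi_gen g)))"
    by (simp only: theta_eval_gen_shift[OF S_sym])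
  then show ?case
    unfolding Psi_Cons theta_eval_Cons form_ten_TrS.add form_ten_TrS_scale
    using Cons by (simp add: algebra_simps)
qed

theorem corollary4p17:
  fixes phi :: "'g::finite vec \<Rightarrow> 'g vec"
    and S :: "'g \<Rightarrow> 'g \<Rightarrow> int"
    and xs :: "(int \<times> 'g vec gen) list"
  assumes phi_add: "\<And>u v. phi (u + v) = phi u + phi v"
    and phi_a: "\<And>i. phi (avec i) = avec i"
    and phi_b: "\<And>l. phi (bvec l) = bvec l + (\<Sum>k\<in>UNIV. scal (S k l) (avec k))"
    and S_sym: "\<And>k l. S k l = S l k"
  shows "(of_int (mu_rep phi xs) :: rat)
         = (1/2) * of_int (form_ten (SM S) (TrS S (Psi xs)))
           + of_int (form_ten deltaM (TrS S (Psi xs)))"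
proof -
  have "additive phi"
    using phi_add by unfold_locales
  then have "(\<lambda>u v. omega_delta (phi u) (phi v)) = (\<lambda>u v. omega_delta u v + form_vec (SM S) u v)"
    using phi_a phi_b by (simp add: omega_delta_lagrangian_torelli)
  then have "2 * mu_rep phi xs
      = form_ten (SM S) (TrS S (Psi xs)) + 2 * form_ten deltaM (TrS S (Psi xs))"
    unfolding mu_rep_def
    using theta_eval_shift[OF S_sym, where B = deltaM, folded omega_delta_def] by simp
  then show ?thesis
    by (simp add: field_simps flip: of_int_mult of_int_add)
qed

end
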